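(* Let $\rho$ be $\mathfrak L$-regular, fix $G>0$ and $r\in(0,1)$, and suppose $g\in[0,G]$, $t=g/(K\log K)$. There exists $C=C(r,G)>0$ (also depending on $\mathfrak L$) such that the following holds. For all $E_1,E_2\in\mathbb R$, integers $K\ge2$ and $j\in\{1,\dots,K-1\}$, let $X_1,\dots,X_{K-1}$ be independent random variables, where $X_i$ has density $p_{E_1}$ for $i\le j$ and density $p_{E_2}$ for $i>j$, and set $Q=\sum_{i=1}^{K-1}X_i$. Then for every $A>0$, $$\mathbb P(|Q|\ge A)\le\frac{CK}{r\,A^{1-r}}.$$
   Context: A probability density $p:\mathbb R\to[0,\infty)$ is $\mathfrak L$-regular ($\mathfrak L>0$) if: (i) $p(x)\le\mathfrak L(1+x^2)^{-1}$ for all $x$; (ii) $p(x)\ge\mathfrak L^{-1}$ for all $x\in[-\mathfrak L^{-1},\mathfrak L^{-1}]$; (iii) $p'$ exists everywhere and $|p'(x)|\le\mathfrak L(1+|x|)^{-1-1/\mathfrak L}$ for all $x$; (iv) for every $v>0$, $\inf_{|x|<v}p(x)>0$; (v) $p'(x)=0$ for only finitely many $x$. $V_0$ denotes a random variable with density $\rho$. Self-energy densities: for $E\in\mathbb R$, $p_E$ is the density of a fixed (arbitrarily chosen) real-valued solution $\Gamma$ of the distributional equation $\Gamma\overset{d}{=}\big(V_0-E-t^2\sum_{i=1}^K\Gamma_i\big)^{-1}$, where $\Gamma_1,\dots,\Gamma_K$ are i.i.d. copies of $\Gamma$ independent of $V_0$. *)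

theory Defs
  imports "HOL-Probability.Probability"
begin

definition prob_density :: "(real \<Rightarrow> real) \<Rightarrow> bool" where
  "prob_density p \<longleftrightarrow> p \<in> borel_measurable borel \<and> (\<forall>x. 0 \<le> p x)
     \<and> (\<integral>\<^sup>+ x. ennreal (p x) \<partial>lborel) = 1"

definition L_regular :: "real \<Rightarrow> (real \<Rightarrow> real) \<Rightarrow> bool" where
  "L_regular L p \<longleftrightarrow>
     (\<forall>x. p x \<le> L / (1 + x^2)) \<and>
     (\<forall>x. \<bar>x\<bar> \<le> 1 / L \<longrightarrow> p x \<ge> 1 / L) \<and>
     (\<forall>x. p differentiable (at x)) \<and>
     (\<forall>x. \<bar>deriv p x\<bar> \<le> L * (1 + \<bar>x\<bar>) powr (-1 - 1 / L)) \<and>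
     (\<forall>v>0. (INF x\<in>{x. \<bar>x\<bar> < v}. p x) > 0) \<and>
     finite {x. deriv p x = 0}"

text \<open>The law mu of Gamma solves Gamma =d (V0 - E - t^2 (Gamma_1+...+Gamma_K))^(-1),
  with V0 of density rho and Gamma_i i.i.d. copies of Gamma independent of V0.\<close>
definition self_energy_eq ::
  "(real \<Rightarrow> real) \<Rightarrow> nat \<Rightarrow> real \<Rightarrow> real \<Rightarrow> real measure \<Rightarrow> bool" where
  "self_energy_eq \<rho> K t E \<mu> \<longleftrightarrow>
     distr (density lborel (\<lambda>x. ennreal (\<rho> x)) \<Otimes>\<^sub>M (\<Pi>\<^sub>M i\<in>{1..K}. \<mu>)) lborel
       (\<lambda>(v, \<gamma>). inverse (v - E - t^2 * (\<Sum>i=1..K. \<gamma> i))) = \<mu>"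

definition self_energy_density ::
  "(real \<Rightarrow> real) \<Rightarrow> nat \<Rightarrow> real \<Rightarrow> real \<Rightarrow> (real \<Rightarrow> real) \<Rightarrow> bool" where
  "self_energy_density \<rho> K t E p \<longleftrightarrow>
     prob_density p \<and> self_energy_eq \<rho> K t E (density lborel (\<lambda>x. ennreal (p x)))"

end

theory Submission
  imports Defs
begin

text \<open>
  For \<open>0 < s < 1\<close> the map \<open>x \<mapsto> \<bar>x\<bar> powr s\<close> is subadditive, so
  Markov's inequality gives \<open>P(\<bar>Q\<bar> \<ge> A) \<le> A powr -s \<cdot> \<Sum>\<^sub>i E \<bar>X\<^sub>i\<bar> powr s\<close>, and no independence is
  used. Each \<open>X\<^sub>i\<close> has the law of a solution \<open>\<Gamma> = (V\<^sub>0 - c)\<inverse>\<close> of the self-energy equation, where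
  \<open>c\<close> is independent of \<open>V\<^sub>0\<close>. Conditionally on \<open>c\<close>,
  \<open>E \<bar>V\<^sub>0 - c\<bar> powr -s \<le> 1 + \<parallel>\<rho>\<parallel>\<^sub>\<infinity> \<integral>\<^bsub>-1..1\<^esub> \<bar>x\<bar> powr -s dx = 1 + 2 \<parallel>\<rho>\<parallel>\<^sub>\<infinity> / (1 - s)\<close>,
  uniformly in \<open>E\<close>, \<open>K\<close> and \<open>t\<close>. With \<open>s = 1 - r\<close> and \<open>\<parallel>\<rho>\<parallel>\<^sub>\<infinity> \<le> L\<close> one may take \<open>C = 1 + 2 L\<close>.
\<close>

lemma powr_add_le:
  fixes a b s :: real
  assumes "0 \<le> a" "0 \<le> b" "0 < s" "s \<le> 1"
  shows "(a + b) powr s \<le> a powr s + b powr s"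
proof (cases "a + b = 0")
  case True
  then show ?thesis using assms by simp
next
  case False
  then have ab: "a + b > 0" using assms by simp
  have le_powr: "x \<le> x powr s" if "0 \<le> x" "x \<le> 1" for x :: real
    using powr_mono'[of s 1 x] that assms by simp
  have "1 = a / (a + b) + b / (a + b)"
    using ab by (simp add: add_divide_distrib[symmetric])
  also have "\<dots> \<le> (a / (a + b)) powr s + (b / (a + b)) powr s"
    using assms ab by (intro add_mono le_powr) auto
  also have "\<dots> = (a powr s + b powr s) / (a + b) powr s"
    using assms ab by (simp add: powr_divide add_divide_distrib)
  finally show ?thesis using ab by (simp add: le_divide_eq)
qed

lemma abs_sum_powr_le:
  fixes x :: "'a \<Rightarrow> real" and s :: real
  assumes "0 < s" "s \<le> 1"
  shows "\<bar>\<Sum>i\<in>I. x i\<bar> powr s \<le> (\<Sum>i\<in>I. \<bar>x i\<bar> powr s)"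
proof (induction I rule: infinite_finite_induct)
  case (insert i I)
  have "\<bar>\<Sum>i\<in>insert i I. x i\<bar> powr s \<le> (\<bar>x i\<bar> + \<bar>\<Sum>i\<in>I. x i\<bar>) powr s"
    using insert assms by (intro powr_mono2) auto
  also have "\<dots> \<le> \<bar>x i\<bar> powr s + \<bar>\<Sum>i\<in>I. x i\<bar> powr s"
    using assms by (intro powr_add_le) auto
  also have "\<dots> \<le> (\<Sum>i\<in>insert i I. \<bar>x i\<bar> powr s)"
    using insert by simp
  finally show ?case .
qed simp_all

lemma has_integral_abs_powr_neg:
  fixes s :: real
  assumes "0 < s" "s < 1"
  shows "((\<lambda>x. \<bar>x\<bar> powr - s) has_integral 2 / (1 - s)) {-1..1}"
proof -
  have "((\<lambda>x. x powr - s) has_integral 1 / (1 - s)) {0..1}"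
    using has_integral_powr_from_0[of "- s" 1] assms by simp
  then have right: "((\<lambda>x. \<bar>x\<bar> powr - s) has_integral 1 / (1 - s)) {0..1}"
    by (rule has_integral_eq[rotated]) simp
  have "((\<lambda>x. \<bar>- x\<bar> powr - s) has_integral 1 / (1 - s)) {-1..-0}"
    using right by (rule has_integral_reflect_real[THEN iffD2])
  then have left: "((\<lambda>x. \<bar>x\<bar> powr - s) has_integral 1 / (1 - s)) {-1..0}"
    by simp
  show ?thesis
    using has_integral_combine[OF _ _ left right] by simp
qed

lemma nn_integral_density_inverse_powr_le:
  fixes \<rho> :: "real \<Rightarrow> real" and c L s :: real
  assumes "prob_density \<rho>" "\<And>x. \<rho> x \<le> L" "0 < s" "s < 1"
  shows "(\<integral>\<^sup>+v. ennreal (\<rho> v) * ennreal (\<bar>inverse (v - c)\<bar> powr s) \<partial>lborel)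
    \<le> ennreal (1 + 2 * L / (1 - s))"
proof -
  have [measurable]: "\<rho> \<in> borel_measurable borel" and nonneg: "\<And>x. 0 \<le> \<rho> x"
    and total: "(\<integral>\<^sup>+x. ennreal (\<rho> x) \<partial>lborel) = 1"
    using assms(1) unfolding prob_density_def by auto
  have "0 \<le> L" using nonneg assms(2) order.trans by blast
  define h where "h x = indicator {-1..1} x * \<bar>x\<bar> powr - s" for x :: real
  have [measurable]: "h \<in> borel_measurable borel" unfolding h_def by measurable
  have h_nonneg: "0 \<le> h x" for x unfolding h_def by simp
  have "(\<integral>\<^sup>+x. ennreal (h x) \<partial>lborel) = ennreal (2 / (1 - s))"
  proof (rule nn_integral_has_integral_lborel)
    have "h = (\<lambda>x. if x \<in> {-1..1} then \<bar>x\<bar> powr - s else 0)"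
      by (auto simp: h_def)
    then show "(h has_integral 2 / (1 - s)) UNIV"
      using has_integral_abs_powr_neg[OF assms(3,4)] by (simp only: has_integral_restrict_UNIV)
  qed (simp_all add: h_nonneg)
  then have h_shift: "(\<integral>\<^sup>+v. ennreal (h (v - c)) \<partial>lborel) = ennreal (2 / (1 - s))"
    using nn_integral_real_affine[of "\<lambda>x. ennreal (h x)" 1 "- c"] by simp
  \<comment> \<open>Away from \<open>c\<close> the factor \<open>\<bar>v - c\<bar> powr -s\<close> is at most \<open>1\<close>; near \<open>c\<close> the density is at most \<open>L\<close>.\<close>
  have pointwise: "\<rho> v * \<bar>inverse (v - c)\<bar> powr s \<le> \<rho> v + L * h (v - c)" for v
  proof (cases "\<bar>v - c\<bar> \<ge> 1")
    case True
    then have "\<bar>inverse (v - c)\<bar> powr s \<le> 1"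
      using assms(3) by (intro powr_le1) (auto simp: abs_inverse inverse_le_1_iff)
    then have "\<rho> v * \<bar>inverse (v - c)\<bar> powr s \<le> \<rho> v"
      using nonneg by (simp add: mult_left_le)
    then show ?thesis using \<open>0 \<le> L\<close> h_nonneg by (simp add: add_increasing2)
  next
    case False
    then have "\<bar>inverse (v - c)\<bar> powr s = h (v - c)"
      by (cases "v = c") (auto simp: h_def indicator_def abs_inverse powr_minus inverse_powr)
    moreover have "\<rho> v * h (v - c) \<le> L * h (v - c)"
      using assms(2) h_nonneg by (intro mult_right_mono)
    ultimately show ?thesis using nonneg by (simp add: add_increasing)
  qed
  have "(\<integral>\<^sup>+v. ennreal (\<rho> v) * ennreal (\<bar>inverse (v - c)\<bar> powr s) \<partial>lborel)
      \<le> (\<integral>\<^sup>+v. ennreal (\<rho> v) + ennreal L * ennreal (h (v - c)) \<partial>lborel)"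
    using pointwise nonneg \<open>0 \<le> L\<close> h_nonneg
    by (intro nn_integral_mono)
       (simp add: ennreal_mult[symmetric] ennreal_plus[symmetric] del: ennreal_plus)
  also have "\<dots> = 1 + ennreal L * ennreal (2 / (1 - s))"
    by (subst nn_integral_add) (auto simp: total nn_integral_cmult h_shift)
  also have "\<dots> = ennreal (1 + 2 * L / (1 - s))"
    using \<open>0 \<le> L\<close> assms(4) by (simp add: ennreal_mult[symmetric] ennreal_plus)
  finally show ?thesis .
qed

lemma prob_space_density_prob_density:
  "prob_density p \<Longrightarrow> prob_space (density lborel (\<lambda>x. ennreal (p x)))"
  unfolding prob_density_def by (intro prob_spaceI) (auto simp: emeasure_density)

lemma self_energy_density_abs_powr_moment_le:
  fixes \<rho> p :: "real \<Rightarrow> real" and L s :: real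
  assumes "prob_density \<rho>" "\<And>x. \<rho> x \<le> L" "0 < s" "s < 1"
    and "self_energy_density \<rho> K t E p"
  shows "(\<integral>\<^sup>+y. ennreal (p y) * ennreal (\<bar>y\<bar> powr s) \<partial>lborel) \<le> ennreal (1 + 2 * L / (1 - s))"
proof -
  define \<mu> where "\<mu> = density lborel (\<lambda>x. ennreal (p x))"
  define \<nu> where "\<nu> = density lborel (\<lambda>x. ennreal (\<rho> x))"
  define P where "P = (\<Pi>\<^sub>M i\<in>{1..K}. \<mu>)"
  define f where "f = (\<lambda>(v, \<gamma>). inverse (v - E - t^2 * (\<Sum>i=1..K. \<gamma> i)))"
  have "prob_density p" and law: "distr (\<nu> \<Otimes>\<^sub>M P) lborel f = \<mu>"
    using assms(5) unfolding self_energy_density_def self_energy_eq_def \<mu>_def \<nu>_def P_def f_def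
    by auto
  have [measurable]: "p \<in> borel_measurable borel" "\<rho> \<in> borel_measurable borel"
    using \<open>prob_density p\<close> assms(1) unfolding prob_density_def by auto
  have f_measurable[measurable]: "f \<in> borel_measurable (\<nu> \<Otimes>\<^sub>M P)"
    unfolding f_def \<nu>_def P_def \<mu>_def by measurable
  interpret \<mu>: prob_space \<mu>
    unfolding \<mu>_def using \<open>prob_density p\<close> by (rule prob_space_density_prob_density)
  interpret \<nu>: prob_space \<nu>
    unfolding \<nu>_def using assms(1) by (rule prob_space_density_prob_density)
  interpret P: prob_space P
    unfolding P_def by (rule prob_space_PiM) (rule \<mu>.prob_space_axioms)
  interpret pair_sigma_finite \<nu> P
    by unfold_locales
  have "(\<integral>\<^sup>+y. ennreal (p y) * ennreal (\<bar>y\<bar> powr s) \<partial>lborel) = (\<integral>\<^sup>+y. ennreal (\<bar>y\<bar> powr s) \<partial>\<mu>)"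
    unfolding \<mu>_def by (simp add: nn_integral_density)
  also have "\<dots> = (\<integral>\<^sup>+z. ennreal (\<bar>f z\<bar> powr s) \<partial>(\<nu> \<Otimes>\<^sub>M P))"
    unfolding law[symmetric] by (simp add: nn_integral_distr)
  also have "\<dots> = (\<integral>\<^sup>+\<gamma>. (\<integral>\<^sup>+v. ennreal (\<bar>f (v, \<gamma>)\<bar> powr s) \<partial>\<nu>) \<partial>P)"
    by (rule nn_integral_snd[symmetric]) measurable
  also have "\<dots> \<le> (\<integral>\<^sup>+\<gamma>. ennreal (1 + 2 * L / (1 - s)) \<partial>P)"
  proof (rule nn_integral_mono)
    fix \<gamma> :: "nat \<Rightarrow> real"
    have "(\<integral>\<^sup>+v. ennreal (\<bar>f (v, \<gamma>)\<bar> powr s) \<partial>\<nu>)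
        = (\<integral>\<^sup>+v. ennreal (\<rho> v) * ennreal (\<bar>inverse (v - (E + t^2 * (\<Sum>i=1..K. \<gamma> i)))\<bar> powr s) \<partial>lborel)"
      unfolding \<nu>_def f_def by (simp add: nn_integral_density diff_diff_eq)
    also have "\<dots> \<le> ennreal (1 + 2 * L / (1 - s))"
      by (rule nn_integral_density_inverse_powr_le[OF assms(1-4)])
    finally show "(\<integral>\<^sup>+v. ennreal (\<bar>f (v, \<gamma>)\<bar> powr s) \<partial>\<nu>) \<le> ennreal (1 + 2 * L / (1 - s))" .
  qed
  also have "\<dots> = ennreal (1 + 2 * L / (1 - s))"
    by (simp add: P.emeasure_space_1)
  finally show ?thesis .
qed

lemma distributed_self_energy_abs_powr_moment_le:
  fixes \<rho> p :: "real \<Rightarrow> real" and Y :: "'a \<Rightarrow> real" and L s :: real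
  assumes "prob_density \<rho>" "\<And>x. \<rho> x \<le> L" "0 < s" "s < 1"
    and "self_energy_density \<rho> K t E p" "distributed M lborel Y (\<lambda>x. ennreal (p x))"
  shows "(\<integral>\<^sup>+\<omega>. ennreal (\<bar>Y \<omega>\<bar> powr s) \<partial>M) \<le> ennreal (1 + 2 * L / (1 - s))"
  using self_energy_density_abs_powr_moment_le[OF assms(1-5)]
    distributed_nn_integral[OF assms(6), of "\<lambda>y. ennreal (\<bar>y\<bar> powr s)"]
  by simp

lemma (in prob_space) prob_abs_sum_ge_le_abs_powr_moments:
  fixes X :: "'i \<Rightarrow> 'a \<Rightarrow> real" and A B s :: real
  assumes "finite I" "\<And>i. i \<in> I \<Longrightarrow> X i \<in> borel_measurable M"
    and "\<And>i. i \<in> I \<Longrightarrow> (\<integral>\<^sup>+\<omega>. ennreal (\<bar>X i \<omega>\<bar> powr s) \<partial>M) \<le> ennreal B"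
    and "0 \<le> B" "0 < A" "0 < s" "s \<le> 1"
  shows "prob {\<omega>\<in>space M. A \<le> \<bar>\<Sum>i\<in>I. X i \<omega>\<bar>} \<le> card I * B / A powr s"
proof -
  define S where "S = {\<omega>\<in>space M. A \<le> \<bar>\<Sum>i\<in>I. X i \<omega>\<bar>}"
  have [measurable]: "S \<in> events"
    unfolding S_def using assms(2) by measurable
  have indicator_le: "A powr s * indicator S \<omega> \<le> (\<Sum>i\<in>I. \<bar>X i \<omega>\<bar> powr s)" for \<omega>
  proof (cases "\<omega> \<in> S")
    case True
    then have "A powr s \<le> \<bar>\<Sum>i\<in>I. X i \<omega>\<bar> powr s"
      unfolding S_def using assms(5,6) by (intro powr_mono2) auto
    also have "\<dots> \<le> (\<Sum>i\<in>I. \<bar>X i \<omega>\<bar> powr s)"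
      using assms(6,7) by (rule abs_sum_powr_le)
    finally show ?thesis using True by simp
  qed (simp add: sum_nonneg)
  have "ennreal (A powr s * prob S) = (\<integral>\<^sup>+\<omega>. ennreal (A powr s * indicator S \<omega>) \<partial>M)"
    by (simp add: emeasure_eq_measure ennreal_mult' ennreal_indicator nn_integral_cmult_indicator)
  also have "\<dots> \<le> (\<integral>\<^sup>+\<omega>. (\<Sum>i\<in>I. ennreal (\<bar>X i \<omega>\<bar> powr s)) \<partial>M)"
    using indicator_le by (intro nn_integral_mono) (simp add: ennreal_leI)
  also have "\<dots> = (\<Sum>i\<in>I. \<integral>\<^sup>+\<omega>. ennreal (\<bar>X i \<omega>\<bar> powr s) \<partial>M)"
    using assms(2) by (intro nn_integral_sum) auto
  also have "\<dots> \<le> ennreal (card I * B)"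
    using sum_mono[of I _ "\<lambda>_. ennreal B", OF assms(3)] assms(4)
    by (simp add: ennreal_mult' ennreal_of_nat_eq_real_of_nat)
  finally have "A powr s * prob S \<le> card I * B"
    using assms(4) by (simp add: ennreal_le_iff)
  then show ?thesis
    unfolding S_def[symmetric] using assms(5) by (simp add: le_divide_eq mult.commute)
qed

lemma L_regular_le:
  assumes "L_regular L p" "0 \<le> L"
  shows "p x \<le> L"
proof -
  have "p x \<le> L / (1 + x^2)"
    using assms(1) unfolding L_regular_def by blast
  also have "\<dots> \<le> L"
    using divide_left_mono[of 1 "1 + x^2" L] assms(2) by (simp add: add_pos_nonneg)
  finally show ?thesis .
qed

theorem lemma6p1:
  fixes L G r :: real and \<rho> :: "real \<Rightarrow> real"
  assumes "L > 0" and "prob_density \<rho>" and "L_regular L \<rho>"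
    and "G > 0" and "0 < r" and "r < 1"
  shows "\<exists>C>0. \<forall>(g::real) (K::nat) (p::real \<Rightarrow> real \<Rightarrow> real) (E1::real) (E2::real) (j::nat)
      (A::real) (M::'a measure) (X::nat \<Rightarrow> 'a \<Rightarrow> real).
      0 \<le> g \<longrightarrow> g \<le> G \<longrightarrow> K \<ge> 2 \<longrightarrow>
      (\<forall>E. self_energy_density \<rho> K (g / (real K * ln (real K))) E (p E)) \<longrightarrow>
      1 \<le> j \<longrightarrow> j \<le> K - 1 \<longrightarrow> A > 0 \<longrightarrow>
      prob_space M \<longrightarrow>
      prob_space.indep_vars M (\<lambda>_. borel) X {1..K-1} \<longrightarrow>
      (\<forall>i\<in>{1..K-1}. distributed M lborel (X i)
          (\<lambda>x. ennreal (p (if i \<le> j then E1 else E2) x))) \<longrightarrow>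
      measure M {\<omega>\<in>space M. \<bar>\<Sum>i=1..K-1. X i \<omega>\<bar> \<ge> A}
        \<le> C * real K / (r * A powr (1 - r))"
proof (intro exI[of _ "1 + 2 * L"] conjI allI impI)
  fix g :: real and K :: nat and p :: "real \<Rightarrow> real \<Rightarrow> real" and E1 E2 :: real and j :: nat
    and A :: real and M :: "'a measure" and X :: "nat \<Rightarrow> 'a \<Rightarrow> real"
  assume sed: "\<forall>E. self_energy_density \<rho> K (g / (real K * ln (real K))) E (p E)"
    and "A > 0" and "prob_space M"
    and dist: "\<forall>i\<in>{1..K-1}. distributed M lborel (X i) (\<lambda>x. ennreal (p (if i \<le> j then E1 else E2) x))"
  interpret prob_space M by fact
  have \<rho>_le: "\<rho> x \<le> L" for x
    using L_regular_le[OF assms(3)] assms(1) by simp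
  have moment: "(\<integral>\<^sup>+\<omega>. ennreal (\<bar>X i \<omega>\<bar> powr (1 - r)) \<partial>M) \<le> ennreal (1 + 2 * L / r)"
    if "i \<in> {1..K-1}" for i
    using distributed_self_energy_abs_powr_moment_le[OF assms(2) \<rho>_le _ _ sed[rule_format],
        where s = "1 - r" and M = M and Y = "X i" and E = "if i \<le> j then E1 else E2"]
      dist that assms(5,6) by simp
  have "prob {\<omega>\<in>space M. A \<le> \<bar>\<Sum>i=1..K-1. X i \<omega>\<bar>} \<le> card {1..K-1} * (1 + 2 * L / r) / A powr (1 - r)"
    using moment dist \<open>A > 0\<close> assms(1,5,6)
    by (intro prob_abs_sum_ge_le_abs_powr_moments) (auto simp: distributed_def)
  also have "\<dots> \<le> real K * ((1 + 2 * L) / r) / A powr (1 - r)"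
  proof (intro divide_right_mono mult_mono)
    show "1 + 2 * L / r \<le> (1 + 2 * L) / r"
      using assms(5,6) by (simp add: add_divide_distrib)
  qed (use assms(1,5) in auto)
  finally show "prob {\<omega>\<in>space M. \<bar>\<Sum>i=1..K-1. X i \<omega>\<bar> \<ge> A} \<le> (1 + 2 * L) * real K / (r * A powr (1 - r))"
    by (simp add: mult.commute)
qed (use assms(1) in simp)

end
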